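(* Let $G$ be an acyclic ADT network over $\mathbb F_q$ with sources $S_i$ and destinations $T_j$, and let $\mathcal C$ be a set of connections. For each pair $(i,j)$, let $M_{i,j}$ be the system matrix from the source processes $\mathcal X(S_i)$ to the destination processes $\mathcal Z(T_j)$; it depends on the coefficients $\alpha,\beta,\epsilon$. Suppose there is an assignment of $\alpha,\beta,\epsilon$ such that: (1) $M_{i,j}=0$ for every pair $(S_i,T_j)$ for which no connection from $S_i$ to $T_j$ belongs to $\mathcal C$; (2) for each $T_j$, if $S_{\sigma(1)},\dots,S_{\sigma(K_j)}$ are the sources having a connection to $T_j$ in $\mathcal C$, then the matrix formed by stacking $M_{\sigma(1),j},\dots,M_{\sigma(K_j),j}$ (the system matrix from $\mathcal X(S_{\sigma(1)}),\dots,\mathcal X(S_{\sigma(K_j)})$ to $\mathcal Z(T_j)$) is a nonsingular $|\mathcal Z(T_j)|\times|\mathcal Z(T_j)|$ matrix. Then $(G,\mathcal C)$ is solvable.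
   Context: ADT network model. $G=(\mathcal V,\mathcal E)$ is a directed acyclic network of supernodes, each with input ports $I(V)$ and output ports $O(V)$. Edges go from output ports to input ports of other supernodes. Linear coding over $\mathbb F_q$: - An output port $e\in O(V)$ carries $Y(e)=\sum_{e'\in I(V)}\beta_{(e',e)}Y(e')$. At a source $S_i$, the term $\sum_k\alpha_{(k,e)}X(S_i,k)$ is added, where $\mathcal X(S_i)$ are $S_i$'s independent processes. - An output port sends the same symbol on all of its outgoing edges. - An input port $e'$ receives $Y(e')=\sum_{(e,e')\in\mathcal E}Y(e)$, the sum taken over $\mathbb F_q$. - A destination $T$ outputs $Z(T,k)=\sum_{e'\in I(T)}\epsilon_{(e',(T,k))}Y(e')$. By linearity, $\mathcal Z(T_j)=\sum_i\mathcal X(S_i)M_{i,j}$ for matrices $M_{i,j}$ over $\mathbb F_q$ determined by the coefficients. A connection is a triple $(S_i,T_j,\mathcal X(S_i,T_j))$ with $\mathcal X(S_i,T_j)\subseteq\mathcal X(S_i)$. $(G,\mathcal C)$ is solvable if a single coefficient choice lets every destination recover the processes of all connections it is a receiver of. *)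

theory Defs
  imports "Jordan_Normal_Form.Matrix"
begin

text \<open>Sources are indexed by i < src_num, destinations by j < dst_num.
  Source S_i is the supernode src i and has the independent processes X(S_i,k), k < mu i.
  Destination T_j is the supernode dst j and outputs the processes Z(T_j,k), k < nu j.\<close>

record ('v, 'p) adt_net =
  nodes   :: "'v set"
  inp     :: "'v \<Rightarrow> 'p set"
  outp    :: "'v \<Rightarrow> 'p set"
  edges   :: "('p \<times> 'p) set"
  src_num :: nat
  src     :: "nat \<Rightarrow> 'v"
  mu      :: "nat \<Rightarrow> nat"
  dst_num :: nat
  dst     :: "nat \<Rightarrow> 'v"
  nu      :: "nat \<Rightarrow> nat"

definition ports :: "('v, 'p) adt_net \<Rightarrow> 'p set" where
  "ports N = (\<Union>V\<in>nodes N. inp N V \<union> outp N V)"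

definition node_rel :: "('v, 'p) adt_net \<Rightarrow> ('v \<times> 'v) set" where
  "node_rel N = {(V, W). V \<in> nodes N \<and> W \<in> nodes N \<and>
      (\<exists>e e'. (e, e') \<in> edges N \<and> e \<in> outp N V \<and> e' \<in> inp N W)}"

definition wf_adt_net :: "('v, 'p) adt_net \<Rightarrow> bool" where
  "wf_adt_net N \<longleftrightarrow>
     finite (nodes N) \<and>
     (\<forall>V\<in>nodes N. finite (inp N V) \<and> finite (outp N V) \<and> inp N V \<inter> outp N V = {}) \<and>
     (\<forall>V\<in>nodes N. \<forall>W\<in>nodes N. V \<noteq> W \<longrightarrow>
        (inp N V \<union> outp N V) \<inter> (inp N W \<union> outp N W) = {}) \<and>
     edges N \<subseteq> {(e, e'). \<exists>V\<in>nodes N. \<exists>W\<in>nodes N. V \<noteq> W \<and> e \<in> outp N V \<and> e' \<in> inp N W} \<and>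
     (\<forall>i < src_num N. src N i \<in> nodes N) \<and>
     (\<forall>j < dst_num N. dst N j \<in> nodes N)"

definition acyclic_adt_net :: "('v, 'p) adt_net \<Rightarrow> bool" where
  "acyclic_adt_net N \<longleftrightarrow> acyclic (node_rel N)"

text \<open>Coding coefficients: alpha i k e = \<alpha>_(k,e) at source S_i (output port e),
  beta e' e = \<beta>_(e',e), eps j e' k = \<epsilon>_(e',(T_j,k)).\<close>
record ('f, 'p) coeffs =
  alpha :: "nat \<Rightarrow> nat \<Rightarrow> 'p \<Rightarrow> 'f"
  beta  :: "'p \<Rightarrow> 'p \<Rightarrow> 'f"
  eps   :: "nat \<Rightarrow> 'p \<Rightarrow> nat \<Rightarrow> 'f"

text \<open>By linearity, Y(e) = sum over (i,k) of Y e i k * X(S_i,k).  The following are the coding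
  equations for these coefficient functions (ports outside the network carry 0).\<close>
definition coding_eqs ::
  "('v, 'p) adt_net \<Rightarrow> ('f::field, 'p) coeffs \<Rightarrow> ('p \<Rightarrow> nat \<Rightarrow> nat \<Rightarrow> 'f) \<Rightarrow> bool" where
  "coding_eqs N c Y \<longleftrightarrow>
     (\<forall>V\<in>nodes N. \<forall>e\<in>outp N V. \<forall>i k.
        Y e i k = (\<Sum>e'\<in>inp N V. beta c e' e * Y e' i k)
                  + (if i < src_num N \<and> src N i = V \<and> k < mu N i then alpha c i k e else 0)) \<and>
     (\<forall>V\<in>nodes N. \<forall>e'\<in>inp N V. \<forall>i k.
        Y e' i k = (\<Sum>e\<in>{e. (e, e') \<in> edges N}. Y e i k)) \<and>
     (\<forall>p. p \<notin> ports N \<longrightarrow> (\<forall>i k. Y p i k = 0))"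

definition port_signal ::
  "('v, 'p) adt_net \<Rightarrow> ('f::field, 'p) coeffs \<Rightarrow> 'p \<Rightarrow> nat \<Rightarrow> nat \<Rightarrow> 'f" where
  "port_signal N c = (THE Y. coding_eqs N c Y)"

text \<open>System matrix M_{i,j} (mu i x nu j): entry (k,k') is the coefficient of X(S_i,k) in Z(T_j,k').\<close>
definition sys_mat :: "('v, 'p) adt_net \<Rightarrow> ('f::field, 'p) coeffs \<Rightarrow> nat \<Rightarrow> nat \<Rightarrow> 'f mat" where
  "sys_mat N c i j = mat (mu N i) (nu N j)
     (\<lambda>(k, k'). \<Sum>e'\<in>inp N (dst N j). eps c j e' k' * port_signal N c e' i k)"

definition dest_out :: "('v, 'p) adt_net \<Rightarrow> ('f::field, 'p) coeffs \<Rightarrow> nat \<Rightarrow> (nat \<Rightarrow> nat \<Rightarrow> 'f) \<Rightarrow> nat \<Rightarrow> 'f" where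
  "dest_out N c j x k' = (\<Sum>i<src_num N. \<Sum>k<mu N i. x i k * sys_mat N c i j $$ (k, k'))"

text \<open>A connection (S_i, T_j, X(S_i,T_j)) is encoded as (i, j, K) with K \<subseteq> {..<mu i}.\<close>
definition wf_connections :: "('v, 'p) adt_net \<Rightarrow> (nat \<times> nat \<times> nat set) set \<Rightarrow> bool" where
  "wf_connections N C \<longleftrightarrow>
     (\<forall>(i, j, K)\<in>C. i < src_num N \<and> j < dst_num N \<and> K \<subseteq> {..<mu N i})"

text \<open>(G,C) is solvable if one choice of coefficients lets every destination T_j recover
  (i.e. its output determines) the processes of all connections it receives.\<close>
definition solvable :: "('v, 'p) adt_net \<Rightarrow> (nat \<times> nat \<times> nat set) set \<Rightarrow> 'f::field itself \<Rightarrow> bool" where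
  "solvable N C _ \<longleftrightarrow>
     (\<exists>c :: ('f, 'p) coeffs. \<forall>j < dst_num N. \<forall>x x'.
        (\<forall>k' < nu N j. dest_out N c j x k' = dest_out N c j x' k') \<longrightarrow>
        (\<forall>(i, j', K)\<in>C. j' = j \<longrightarrow> (\<forall>k\<in>K. x i k = x' i k)))"

text \<open>Sources having a connection to T_j, in increasing order sigma(1) < ... < sigma(K_j).\<close>
definition conn_sources :: "(nat \<times> nat \<times> nat set) set \<Rightarrow> nat \<Rightarrow> nat set" where
  "conn_sources C j = {i. \<exists>K. (i, j, K) \<in> C}"

definition stacked_mat ::
  "('v, 'p) adt_net \<Rightarrow> ('f::field, 'p) coeffs \<Rightarrow> (nat \<times> nat \<times> nat set) set \<Rightarrow> nat \<Rightarrow> 'f mat" where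
  "stacked_mat N c C j = mat_of_rows (nu N j)
     (concat (map (\<lambda>i. rows (sys_mat N c i j)) (sorted_list_of_set (conn_sources C j))))"

end

theory Submission
  imports Defs
begin

text \<open>Destination T_j sees \<open>Z(T_j) = \<Sum>\<^sub>i X(S_i) M_{i,j}\<close>.  Since the matrices of
  unconnected sources vanish, two inputs with the same output at T_j differ by a row vector in
  the left kernel of the stacked matrix of the sources connected to T_j.  That matrix is
  invertible, so the difference vanishes on every process of these sources.  Only the system
  matrices enter the argument; well-formedness and acyclicity of the network just make them
  well defined.\<close>

lemma invertible_mat_left_kernel:
  fixes S :: "'a::comm_ring_1 mat"
  assumes S: "S \<in> carrier_mat n n" and inv: "invertible_mat S"
    and comb: "\<forall>k'<n. (\<Sum>r<n. w r * S $$ (r, k')) = 0"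
  shows "\<forall>r<n. w r = 0"
proof -
  obtain B where SB: "S * B = 1\<^sub>m n" and B: "B \<in> carrier_mat n n"
    using inv S unfolding invertible_mat_def inverts_mat_def
    by (metis carrier_matD carrier_matI index_mult_mat(3) index_one_mat(3))
  have BS: "transpose_mat B * transpose_mat S = 1\<^sub>m n"
    using S B SB by (metis transpose_mult transpose_one)
  define v where "v = vec n w"
  have v: "v \<in> carrier_vec n" unfolding v_def by simp
  have "transpose_mat S *\<^sub>v v = 0\<^sub>v n"
    using S comb by (intro eq_vecI) (auto simp: v_def scalar_prod_def atLeast0LessThan mult.commute)
  then have "transpose_mat B *\<^sub>v (transpose_mat S *\<^sub>v v) = 0\<^sub>v n"
    using B by auto
  moreover have "transpose_mat B *\<^sub>v (transpose_mat S *\<^sub>v v) = v"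
    using S B v BS by (metis assoc_mult_mat_vec transpose_carrier_mat one_mult_mat_vec)
  ultimately show ?thesis unfolding v_def by (metis index_vec index_zero_vec(1))
qed

lemma sum_list_concat: "sum_list (concat xss) = sum_list (map sum_list xss)"
  by (induction xss) simp_all

lemma sum_weighted_mat_of_rows:
  assumes "\<forall>p\<in>set P. dim_vec (snd p) = n" and "k' < n"
  shows "(\<Sum>r<length P. fst (P ! r) * mat_of_rows n (map snd P) $$ (r, k'))
       = (\<Sum>p\<leftarrow>P. fst p * snd p $ k')"
  using assms by (simp add: sum_list_sum_nth atLeast0LessThan mat_of_rows_index)

lemma stacked_rows_independent:
  fixes M :: "nat \<Rightarrow> 'a::comm_ring_1 mat"
  assumes dist: "distinct is" and dims: "\<forall>i\<in>set is. M i \<in> carrier_mat (m i) n"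
    and S: "mat_of_rows n (concat (map (\<lambda>i. rows (M i)) is)) \<in> carrier_mat n n"
    and inv: "invertible_mat (mat_of_rows n (concat (map (\<lambda>i. rows (M i)) is)))"
    and comb: "\<forall>k'<n. (\<Sum>i\<in>set is. \<Sum>k<m i. d i k * M i $$ (k, k')) = 0"
    and i: "i \<in> set is" and k: "k < m i"
  shows "d i k = 0"
proof -
  \<comment> \<open>pairing each weight with its row keeps the two concatenations aligned\<close>
  define P where "P = concat (map (\<lambda>i. map (\<lambda>k. (d i k, row (M i) k)) [0..<m i]) is)"
  have rows: "map snd P = concat (map (\<lambda>i. rows (M i)) is)"
    unfolding P_def map_concat using dims
    by (auto simp: rows_def o_def intro!: arg_cong[where f = concat] map_cong)
  have len: "length P = n"
    using S unfolding rows[symmetric] by (metis carrier_matD(1) length_map mat_of_rows_carrier(2))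
  have comb_P: "(\<Sum>r<n. fst (P ! r) * mat_of_rows n (map snd P) $$ (r, k')) = 0"
    if "k' < n" for k'
  proof -
    have "(\<Sum>r<n. fst (P ! r) * mat_of_rows n (map snd P) $$ (r, k'))
        = (\<Sum>p\<leftarrow>P. fst p * snd p $ k')"
      using sum_weighted_mat_of_rows[of P n k'] dims \<open>k' < n\<close> len
      by (auto simp: P_def)
    also have "\<dots> = (\<Sum>i\<leftarrow>is. \<Sum>k\<leftarrow>[0..<m i]. d i k * M i $$ (k, k'))"
      unfolding P_def map_concat sum_list_concat using dims \<open>k' < n\<close>
      by (auto simp: o_def intro!: arg_cong[where f = sum_list] map_cong)
    also have "\<dots> = (\<Sum>i\<in>set is. \<Sum>k<m i. d i k * M i $$ (k, k'))"
      using dist by (simp add: sum_list_distinct_conv_sum_set atLeast0LessThan[symmetric])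
    finally show ?thesis using comb \<open>k' < n\<close> by simp
  qed
  have "\<forall>r<n. fst (P ! r) = 0"
    by (rule invertible_mat_left_kernel[OF S[folded rows] inv[folded rows]]) (simp add: comb_P)
  moreover have "(d i k, row (M i) k) \<in> set P"
    unfolding P_def using i k by force
  ultimately show ?thesis using len by (metis fst_conv in_set_conv_nth)
qed

lemma dest_out_diff:
  "dest_out N c j x k' - dest_out N c j x' k'
     = (\<Sum>i<src_num N. \<Sum>k<mu N i. (x i k - x' i k) * sys_mat N c i j $$ (k, k'))"
  unfolding dest_out_def by (simp add: sum_subtractf left_diff_distrib)

lemma dest_out_determines_connections:
  assumes conn: "wf_connections N C"
    and zero: "\<forall>i < src_num N. (\<nexists>K. (i, j, K) \<in> C) \<longrightarrow>
                 sys_mat N c i j = 0\<^sub>m (mu N i) (nu N j)"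
    and S: "stacked_mat N c C j \<in> carrier_mat (nu N j) (nu N j)"
    and inv: "invertible_mat (stacked_mat N c C j)"
    and out: "\<forall>k' < nu N j. dest_out N c j x k' = dest_out N c j x' k'"
    and iK: "(i, j, K) \<in> C" and k: "k \<in> K"
  shows "x i k = x' i k"
proof -
  have sources: "conn_sources C j \<subseteq> {..<src_num N}"
    using conn unfolding wf_connections_def conn_sources_def by auto
  define "is" where "is = sorted_list_of_set (conn_sources C j)"
  have set_is: "set is = conn_sources C j" and dist: "distinct is"
    using finite_subset[OF sources] unfolding is_def by auto
  have comb: "(\<Sum>i\<in>set is. \<Sum>k<mu N i. (x i k - x' i k) * sys_mat N c i j $$ (k, k')) = 0"
    if k': "k' < nu N j" for k'
  proof -
    have "(\<Sum>i\<in>set is. \<Sum>k<mu N i. (x i k - x' i k) * sys_mat N c i j $$ (k, k'))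
        = (\<Sum>i<src_num N. \<Sum>k<mu N i. (x i k - x' i k) * sys_mat N c i j $$ (k, k'))"
      using sources zero k' unfolding set_is
      by (intro sum.mono_neutral_left) (auto simp: conn_sources_def)
    also have "\<dots> = 0"
      using out k' by (simp flip: dest_out_diff)
    finally show ?thesis .
  qed
  have "x i k - x' i k = 0"
  proof (rule stacked_rows_independent[OF dist])
    show "\<forall>i\<in>set is. sys_mat N c i j \<in> carrier_mat (mu N i) (nu N j)"
      by (simp add: sys_mat_def)
    show "i \<in> set is" "k < mu N i"
      using iK k conn unfolding set_is conn_sources_def wf_connections_def by auto
  qed (use S inv comb in \<open>simp_all add: stacked_mat_def is_def\<close>)
  then show ?thesis by simp
qed

theorem theorem8:
  fixes N :: "('v, 'p) adt_net" and C :: "(nat \<times> nat \<times> nat set) set"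
  assumes "wf_adt_net N" and "acyclic_adt_net N" and "wf_connections N C"
    and "\<exists>c :: ('f::{field,finite}, 'p) coeffs.
           (\<forall>i < src_num N. \<forall>j < dst_num N. (\<nexists>K. (i, j, K) \<in> C) \<longrightarrow>
               sys_mat N c i j = 0\<^sub>m (mu N i) (nu N j)) \<and>
           (\<forall>j < dst_num N. stacked_mat N c C j \<in> carrier_mat (nu N j) (nu N j) \<and>
               invertible_mat (stacked_mat N c C j))"
  shows "solvable N C TYPE('f)"
proof -
  obtain c :: "('f, 'p) coeffs" where
    zero: "\<forall>i < src_num N. \<forall>j < dst_num N. (\<nexists>K. (i, j, K) \<in> C) \<longrightarrow>
               sys_mat N c i j = 0\<^sub>m (mu N i) (nu N j)" and
    inv: "\<forall>j < dst_num N. stacked_mat N c C j \<in> carrier_mat (nu N j) (nu N j) \<and>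
               invertible_mat (stacked_mat N c C j)"
    using assms(4) by blast
  show ?thesis
    unfolding solvable_def
  proof (intro exI[of _ c] allI impI ballI, clarify)
    fix j x x' i K k
    assume "j < dst_num N" and "\<forall>k' < nu N j. dest_out N c j x k' = dest_out N c j x' k'"
      and "(i, j, K) \<in> C" and "k \<in> K"
    then show "x i k = x' i k"
      using dest_out_determines_connections[OF assms(3)] zero inv by blast
  qed
qed

end
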